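(* Let $S=(X,X_0,X_S,U,\rightarrow,Y,H)$ be a finite metric system with metric $\mathbf{d}$ on $Y$, let $\delta\geq 0$, and let $S_I=(X_I,X_{I0},U,\rightarrow_I)$ and $S_C=(X_C,X_{C0},U,\rightarrow_C)$ be its $\delta$-approximate initial-state estimator and $\delta$-approximate current-state estimator. Then $S$ is $\delta$-approximate infinite-step opaque if and only if for all $(x,q)\in X_I$ and $(x',q')\in X_C$: $x=x'\in X_S$ implies $q\cap q'\not\subseteq X_S$.
   Context: A system is a tuple $S=(X,X_0,X_S,U,\rightarrow,Y,H)$ with state set $X$, initial states $X_0\subseteq X$, secret states $X_S\subseteq X$, inputs $U$, transition relation $\rightarrow\subseteq X\times U\times X$ (write $x\xrightarrow{u}x'$), outputs $Y$, output map $H:X\to Y$; metric if $Y$ has a metric $\mathbf{d}$, finite if $X,U$ are finite. $S$ is $\delta$-approximate infinite-step opaque if for every $x_0\in X_0$, every finite run $x_0\xrightarrow{u_1}x_1\cdots\xrightarrow{u_n}x_n$ and every $k\in\{0,\dots,n\}$ with $x_k\in X_S$, there exist $x_0'\in X_0$ and a finite run $x_0'\xrightarrow{u_1'}x_1'\cdots\xrightarrow{u_n'}x_n'$ (inputs arbitrary) with $x_k'\in X\setminus X_S$ and $\max_{0\le i\le n}\mathbf{d}(H(x_i),H(x_i'))\leq\delta$. Let $\mathbf{Pre}_u(x)=\{x'':x''\xrightarrow{u}x\}$, $\mathbf{Post}_u(x)=\{x':x\xrightarrow{u}x'\}$, extended to sets by union. $S_I$: initial states $X_{I0}=\{(x,q)\in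 X\times 2^X: q=\{x'\in X:\mathbf{d}(H(x),H(x'))\leq\delta\}\}$; $(x,q)\xrightarrow{u}_I(x',q')$ iff $(x',u,x)\in\rightarrow$ and $q'=\bigcup_{\hat u\in U}\mathbf{Pre}_{\hat u}(q)\cap\{x''\in X:\mathbf{d}(H(x'),H(x''))\leq\delta\}$; $X_I$ = states reachable from $X_{I0}$. $S_C$: initial states $X_{C0}=\{(x,q)\in X_0\times 2^{X_0}: q=\{x'\in X_0:\mathbf{d}(H(x),H(x'))\leq\delta\}\}$; $(x,q)\xrightarrow{u}_C(x',q')$ iff $(x,u,x')\in\rightarrow$ and $q'=\bigcup_{\hat u\in U}\mathbf{Post}_{\hat u}(q)\cap\{x''\in X:\mathbf{d}(H(x'),H(x''))\leq\delta\}$; $X_C$ = states reachable from $X_{C0}$. *)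

theory Defs
  imports "HOL-Analysis.Analysis"
begin

text \<open>A system S = (X, X0, XS, U, T, Y, H); the transition relation T is a set of
  triples (x, u, x'), meaning x --u--> x'.\<close>

definition is_system ::
  "'x set \<Rightarrow> 'x set \<Rightarrow> 'x set \<Rightarrow> 'u set \<Rightarrow> ('x \<times> 'u \<times> 'x) set \<Rightarrow> 'y set \<Rightarrow> ('x \<Rightarrow> 'y) \<Rightarrow> bool"
  where "is_system X X0 XS U T Y H \<longleftrightarrow>
     X0 \<subseteq> X \<and> XS \<subseteq> X \<and> T \<subseteq> X \<times> U \<times> X \<and> (\<forall>x\<in>X. H x \<in> Y)"

text \<open>Finite run of length n: states xs 0 .. xs n, inputs us 1 .. us n.\<close>
definition is_run :: "('x \<times> 'u \<times> 'x) set \<Rightarrow> nat \<Rightarrow> (nat \<Rightarrow> 'x) \<Rightarrow> (nat \<Rightarrow> 'u) \<Rightarrow> bool"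
  where "is_run T n xs us \<longleftrightarrow> (\<forall>i<n. (xs i, us (Suc i), xs (Suc i)) \<in> T)"

definition approx_inf_step_opaque ::
  "'x set \<Rightarrow> 'x set \<Rightarrow> 'x set \<Rightarrow> ('x \<times> 'u \<times> 'x) set \<Rightarrow> ('x \<Rightarrow> 'y) \<Rightarrow> ('y \<Rightarrow> 'y \<Rightarrow> real) \<Rightarrow> real \<Rightarrow> bool"
  where "approx_inf_step_opaque X X0 XS T H d \<delta> \<longleftrightarrow>
    (\<forall>n xs us k. xs 0 \<in> X0 \<and> is_run T n xs us \<and> k \<le> n \<and> xs k \<in> XS \<longrightarrow>
       (\<exists>xs' us'. xs' 0 \<in> X0 \<and> is_run T n xs' us' \<and> xs' k \<in> X - XS \<and>
          (\<forall>i\<le>n. d (H (xs i)) (H (xs' i)) \<le> \<delta>)))"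

definition Pre :: "('x \<times> 'u \<times> 'x) set \<Rightarrow> 'u \<Rightarrow> 'x set \<Rightarrow> 'x set"
  where "Pre T u A = {x''. \<exists>x\<in>A. (x'', u, x) \<in> T}"

definition Post :: "('x \<times> 'u \<times> 'x) set \<Rightarrow> 'u \<Rightarrow> 'x set \<Rightarrow> 'x set"
  where "Post T u A = {x'. \<exists>x\<in>A. (x, u, x') \<in> T}"

definition close_set :: "'x set \<Rightarrow> ('x \<Rightarrow> 'y) \<Rightarrow> ('y \<Rightarrow> 'y \<Rightarrow> real) \<Rightarrow> real \<Rightarrow> 'x \<Rightarrow> 'x set"
  where "close_set A H d \<delta> x = {x'\<in>A. d (H x) (H x') \<le> \<delta>}"

definition init_est_init :: "'x set \<Rightarrow> ('x \<Rightarrow> 'y) \<Rightarrow> ('y \<Rightarrow> 'y \<Rightarrow> real) \<Rightarrow> real \<Rightarrow> ('x \<times> 'x set) set"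
  where "init_est_init X H d \<delta> = {(x, q). x \<in> X \<and> q = close_set X H d \<delta> x}"

definition init_est_trans ::
  "'x set \<Rightarrow> 'u set \<Rightarrow> ('x \<times> 'u \<times> 'x) set \<Rightarrow> ('x \<Rightarrow> 'y) \<Rightarrow> ('y \<Rightarrow> 'y \<Rightarrow> real) \<Rightarrow> real
    \<Rightarrow> ('x \<times> 'x set) \<Rightarrow> 'u \<Rightarrow> ('x \<times> 'x set) \<Rightarrow> bool"
  where "init_est_trans X U T H d \<delta> s u s' \<longleftrightarrow>
    (case s of (x, q) \<Rightarrow> case s' of (x', q') \<Rightarrow>
       (x', u, x) \<in> T \<and> q' = (\<Union>uh\<in>U. Pre T uh q) \<inter> close_set X H d \<delta> x')"

inductive_set init_est_reach ::
  "'x set \<Rightarrow> 'u set \<Rightarrow> ('x \<times> 'u \<times> 'x) set \<Rightarrow> ('x \<Rightarrow> 'y) \<Rightarrow> ('y \<Rightarrow> 'y \<Rightarrow> real) \<Rightarrow> real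
    \<Rightarrow> ('x \<times> 'x set) set"
  for X U T H d \<delta>
  where
    init: "s \<in> init_est_init X H d \<delta> \<Longrightarrow> s \<in> init_est_reach X U T H d \<delta>"
  | step: "s \<in> init_est_reach X U T H d \<delta> \<Longrightarrow> u \<in> U \<Longrightarrow> init_est_trans X U T H d \<delta> s u s'
           \<Longrightarrow> s' \<in> init_est_reach X U T H d \<delta>"

definition cur_est_init :: "'x set \<Rightarrow> ('x \<Rightarrow> 'y) \<Rightarrow> ('y \<Rightarrow> 'y \<Rightarrow> real) \<Rightarrow> real \<Rightarrow> ('x \<times> 'x set) set"
  where "cur_est_init X0 H d \<delta> = {(x, q). x \<in> X0 \<and> q = close_set X0 H d \<delta> x}"

definition cur_est_trans ::
  "'x set \<Rightarrow> 'u set \<Rightarrow> ('x \<times> 'u \<times> 'x) set \<Rightarrow> ('x \<Rightarrow> 'y) \<Rightarrow> ('y \<Rightarrow> 'y \<Rightarrow> real) \<Rightarrow> real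
    \<Rightarrow> ('x \<times> 'x set) \<Rightarrow> 'u \<Rightarrow> ('x \<times> 'x set) \<Rightarrow> bool"
  where "cur_est_trans X U T H d \<delta> s u s' \<longleftrightarrow>
    (case s of (x, q) \<Rightarrow> case s' of (x', q') \<Rightarrow>
       (x, u, x') \<in> T \<and> q' = (\<Union>uh\<in>U. Post T uh q) \<inter> close_set X H d \<delta> x')"

inductive_set cur_est_reach ::
  "'x set \<Rightarrow> 'x set \<Rightarrow> 'u set \<Rightarrow> ('x \<times> 'u \<times> 'x) set \<Rightarrow> ('x \<Rightarrow> 'y) \<Rightarrow> ('y \<Rightarrow> 'y \<Rightarrow> real) \<Rightarrow> real
    \<Rightarrow> ('x \<times> 'x set) set"
  for X X0 U T H d \<delta>
  where
    init: "s \<in> cur_est_init X0 H d \<delta> \<Longrightarrow> s \<in> cur_est_reach X X0 U T H d \<delta>"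
  | step: "s \<in> cur_est_reach X X0 U T H d \<delta> \<Longrightarrow> u \<in> U \<Longrightarrow> cur_est_trans X U T H d \<delta> s u s'
           \<Longrightarrow> s' \<in> cur_est_reach X X0 U T H d \<delta>"

end

theory Submission
  imports Defs
begin

text \<open>A secret visit x_k of a run x_0 .. x_n is masked exactly by the non-secret states w that
  are reachable from X0 in k steps with outputs \<delta>-close to those of x_0 .. x_k and from which
  a run of n - k steps with outputs \<delta>-close to those of x_k .. x_n starts. The first kind of
  state forms the current-state estimate of x_0 .. x_k, the second the initial-state estimate of
  x_k .. x_n. Gluing and splitting runs at x_k shows that the reachable pairs of estimator states
  with a common first component are exactly such pairs of estimates, so the intersection
  condition is opacity.\<close>

definition run_append :: "nat \<Rightarrow> (nat \<Rightarrow> 'a) \<Rightarrow> (nat \<Rightarrow> 'a) \<Rightarrow> nat \<Rightarrow> 'a"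
  where "run_append k f g = (\<lambda>i. if i \<le> k then f i else g (i - k))"

definition outputs_close ::
  "('x \<Rightarrow> 'y) \<Rightarrow> ('y \<Rightarrow> 'y \<Rightarrow> real) \<Rightarrow> real \<Rightarrow> nat \<Rightarrow> (nat \<Rightarrow> 'x) \<Rightarrow> (nat \<Rightarrow> 'x) \<Rightarrow> bool"
  where "outputs_close H d \<delta> n xs ys \<longleftrightarrow> (\<forall>i\<le>n. d (H (xs i)) (H (ys i)) \<le> \<delta>)"

definition current_estimate ::
  "'x set \<Rightarrow> ('x \<times> 'u \<times> 'x) set \<Rightarrow> ('x \<Rightarrow> 'y) \<Rightarrow> ('y \<Rightarrow> 'y \<Rightarrow> real) \<Rightarrow> real
    \<Rightarrow> nat \<Rightarrow> (nat \<Rightarrow> 'x) \<Rightarrow> 'x set"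
  where "current_estimate X0 T H d \<delta> k xs =
    {w. \<exists>ys vs. ys 0 \<in> X0 \<and> is_run T k ys vs \<and> ys k = w \<and> outputs_close H d \<delta> k xs ys}"

definition initial_estimate ::
  "'x set \<Rightarrow> ('x \<times> 'u \<times> 'x) set \<Rightarrow> ('x \<Rightarrow> 'y) \<Rightarrow> ('y \<Rightarrow> 'y \<Rightarrow> real) \<Rightarrow> real
    \<Rightarrow> nat \<Rightarrow> (nat \<Rightarrow> 'x) \<Rightarrow> 'x set"
  where "initial_estimate X T H d \<delta> p xs =
    {w \<in> X. \<exists>ys vs. is_run T p ys vs \<and> ys 0 = w \<and> outputs_close H d \<delta> p xs ys}"

subsection \<open>Runs\<close>

lemma is_run_0 [simp]: "is_run T 0 xs us"
  by (simp add: is_run_def)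

lemma is_run_prefix: "is_run T n xs us \<Longrightarrow> k \<le> n \<Longrightarrow> is_run T k xs us"
  unfolding is_run_def by auto

lemma is_run_suffix:
  "is_run T n xs us \<Longrightarrow> k \<le> n \<Longrightarrow> is_run T (n - k) (\<lambda>i. xs (i + k)) (\<lambda>i. us (i + k))"
  unfolding is_run_def by (auto dest: spec[where x="_ + k"])

lemma is_run_Suc_iff:
  "is_run T (Suc n) xs us \<longleftrightarrow>
    (xs 0, us 1, xs 1) \<in> T \<and> is_run T n (\<lambda>i. xs (Suc i)) (\<lambda>i. us (Suc i))"
  unfolding is_run_def by (auto simp: less_Suc_eq_0_disj)

lemma is_run_snoc:
  "is_run T k xs us \<Longrightarrow> (xs k, u, x) \<in> T \<Longrightarrow> is_run T (Suc k) (xs(Suc k := x)) (us(Suc k := u))"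
  unfolding is_run_def by (auto simp: less_Suc_eq)

lemma is_run_append:
  assumes "is_run T k f us" "is_run T p g vs" "f k = g 0"
  shows "is_run T (k + p) (run_append k f g) (run_append k us vs)"
  unfolding is_run_def
proof (intro allI impI)
  fix i assume "i < k + p"
  show "(run_append k f g i, run_append k us vs (Suc i), run_append k f g (Suc i)) \<in> T"
  proof (cases "i < k")
    case True
    then show ?thesis using assms(1) by (simp add: is_run_def run_append_def)
  next
    case False
    then have "(g (i - k), vs (Suc (i - k)), g (Suc (i - k))) \<in> T"
      using assms(2) \<open>i < k + p\<close> by (simp add: is_run_def)
    with False assms(3) show ?thesis
      by (cases "i = k") (auto simp: run_append_def Suc_diff_le)
  qed
qed

lemma is_run_in_states:
  assumes "T \<subseteq> X \<times> U \<times> X" "is_run T n xs us" "xs 0 \<in> X"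
  shows "xs n \<in> X"
proof (cases n)
  case (Suc m)
  then have "(xs m, us (Suc m), xs (Suc m)) \<in> T" using assms(2) by (simp add: is_run_def)
  with assms(1) Suc show ?thesis by auto
qed (use assms in simp)

lemma outputs_close_cong:
  "(\<And>i. i \<le> n \<Longrightarrow> xs i = xs' i) \<Longrightarrow> outputs_close H d \<delta> n xs ys = outputs_close H d \<delta> n xs' ys"
  by (simp add: outputs_close_def)

lemma outputs_close_prefix:
  "outputs_close H d \<delta> n xs ys \<Longrightarrow> k \<le> n \<Longrightarrow> outputs_close H d \<delta> k xs ys"
  by (simp add: outputs_close_def)

lemma outputs_close_suffix:
  "outputs_close H d \<delta> n xs ys \<Longrightarrow> k \<le> n \<Longrightarrow>
    outputs_close H d \<delta> (n - k) (\<lambda>i. xs (i + k)) (\<lambda>i. ys (i + k))"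
  by (simp add: outputs_close_def)

lemma outputs_close_append:
  assumes "outputs_close H d \<delta> k xs f" "outputs_close H d \<delta> p (\<lambda>i. xs (i + k)) g"
  shows "outputs_close H d \<delta> (k + p) xs (run_append k f g)"
  unfolding outputs_close_def
proof (intro allI impI)
  fix i assume "i \<le> k + p"
  show "d (H (xs i)) (H (run_append k f g i)) \<le> \<delta>"
  proof (cases "i \<le> k")
    case False
    then have "i - k \<le> p" using \<open>i \<le> k + p\<close> by simp
    with assms(2) have "d (H (xs (i - k + k))) (H (g (i - k))) \<le> \<delta>"
      unfolding outputs_close_def by blast
    with False show ?thesis by (simp add: run_append_def)
  qed (use assms(1) in \<open>simp add: outputs_close_def run_append_def\<close>)
qed

subsection \<open>Estimates along a run\<close>

lemma current_estimate_0: "current_estimate X0 T H d \<delta> 0 xs = close_set X0 H d \<delta> (xs 0)"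
  by (auto simp: current_estimate_def close_set_def outputs_close_def intro!: exI[of _ "\<lambda>_. _"])

lemma initial_estimate_0: "initial_estimate X T H d \<delta> 0 xs = close_set X H d \<delta> (xs 0)"
  by (auto simp: initial_estimate_def close_set_def outputs_close_def intro!: exI[of _ "\<lambda>_. _"])

lemma current_estimate_cong:
  "(\<And>i. i \<le> k \<Longrightarrow> xs i = xs' i) \<Longrightarrow>
    current_estimate X0 T H d \<delta> k xs = current_estimate X0 T H d \<delta> k xs'"
  unfolding current_estimate_def by (simp cong: outputs_close_cong)

lemma initial_estimate_cong:
  "(\<And>i. i \<le> p \<Longrightarrow> xs i = xs' i) \<Longrightarrow>
    initial_estimate X T H d \<delta> p xs = initial_estimate X T H d \<delta> p xs'"
  unfolding initial_estimate_def by (simp cong: outputs_close_cong)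

lemma current_estimate_Suc:
  assumes "T \<subseteq> X \<times> U \<times> X"
  shows "current_estimate X0 T H d \<delta> (Suc k) xs =
    (\<Union>u\<in>U. Post T u (current_estimate X0 T H d \<delta> k xs)) \<inter> close_set X H d \<delta> (xs (Suc k))"
proof (intro equalityI subsetI)
  fix w assume "w \<in> current_estimate X0 T H d \<delta> (Suc k) xs"
  then obtain ys vs where ys: "ys 0 \<in> X0" "is_run T (Suc k) ys vs" "ys (Suc k) = w"
    "outputs_close H d \<delta> (Suc k) xs ys" unfolding current_estimate_def by blast
  then have "ys k \<in> current_estimate X0 T H d \<delta> k xs"
    using ys(1) is_run_prefix[OF ys(2), of k] outputs_close_prefix[OF ys(4), of k]
    unfolding current_estimate_def by auto
  moreover have "(ys k, vs (Suc k), w) \<in> T" using ys(2,3) unfolding is_run_def by blast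
  moreover have "d (H (xs (Suc k))) (H w) \<le> \<delta>" using ys(3,4) by (auto simp: outputs_close_def)
  ultimately show "w \<in> (\<Union>u\<in>U. Post T u (current_estimate X0 T H d \<delta> k xs)) \<inter> close_set X H d \<delta> (xs (Suc k))"
    using assms by (auto simp: Post_def close_set_def)
next
  fix w assume "w \<in> (\<Union>u\<in>U. Post T u (current_estimate X0 T H d \<delta> k xs)) \<inter> close_set X H d \<delta> (xs (Suc k))"
  then obtain u v where v: "v \<in> current_estimate X0 T H d \<delta> k xs" "(v, u, w) \<in> T"
    and close: "d (H (xs (Suc k))) (H w) \<le> \<delta>" by (auto simp: Post_def close_set_def)
  then obtain ys vs where ys: "ys 0 \<in> X0" "is_run T k ys vs" "ys k = v" "outputs_close H d \<delta> k xs ys"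
    unfolding current_estimate_def by blast
  have "is_run T (Suc k) (ys(Suc k := w)) (vs(Suc k := u))" using is_run_snoc ys(2,3) v(2) by metis
  moreover have "outputs_close H d \<delta> (Suc k) xs (ys(Suc k := w))"
    using ys(4) close by (auto simp: outputs_close_def le_Suc_eq)
  ultimately show "w \<in> current_estimate X0 T H d \<delta> (Suc k) xs"
    using ys(1) unfolding current_estimate_def by (intro CollectI exI[of _ "ys(Suc k := w)"]) auto
qed

lemma initial_estimate_Suc:
  assumes "T \<subseteq> X \<times> U \<times> X"
  shows "initial_estimate X T H d \<delta> (Suc p) xs =
    (\<Union>u\<in>U. Pre T u (initial_estimate X T H d \<delta> p (\<lambda>i. xs (Suc i)))) \<inter> close_set X H d \<delta> (xs 0)"
proof (intro equalityI subsetI)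
  fix w assume "w \<in> initial_estimate X T H d \<delta> (Suc p) xs"
  then obtain ys vs where ys: "w \<in> X" "is_run T (Suc p) ys vs" "ys 0 = w"
    "outputs_close H d \<delta> (Suc p) xs ys" unfolding initial_estimate_def by blast
  have step: "(w, vs 1, ys 1) \<in> T" using ys(2,3) by (simp add: is_run_Suc_iff)
  have "ys 1 \<in> initial_estimate X T H d \<delta> p (\<lambda>i. xs (Suc i))"
    using ys(2,4) step assms unfolding initial_estimate_def is_run_Suc_iff outputs_close_def by fastforce
  moreover have "d (H (xs 0)) (H w) \<le> \<delta>" using ys(3,4) by (auto simp: outputs_close_def)
  ultimately show "w \<in> (\<Union>u\<in>U. Pre T u (initial_estimate X T H d \<delta> p (\<lambda>i. xs (Suc i)))) \<inter> close_set X H d \<delta> (xs 0)"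
    using step assms ys(1) by (auto simp: Pre_def close_set_def)
next
  fix w assume "w \<in> (\<Union>u\<in>U. Pre T u (initial_estimate X T H d \<delta> p (\<lambda>i. xs (Suc i)))) \<inter> close_set X H d \<delta> (xs 0)"
  then obtain u v where v: "v \<in> initial_estimate X T H d \<delta> p (\<lambda>i. xs (Suc i))" "(w, u, v) \<in> T"
    and w: "w \<in> X" "d (H (xs 0)) (H w) \<le> \<delta>" by (auto simp: Pre_def close_set_def)
  then obtain ys vs where ys: "is_run T p ys vs" "ys 0 = v" "outputs_close H d \<delta> p (\<lambda>i. xs (Suc i)) ys"
    unfolding initial_estimate_def by blast
  let ?ys = "case_nat w ys" and ?vs = "\<lambda>i. if i = 1 then u else vs (i - 1)"
  have "is_run T (Suc p) ?ys ?vs"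
    using ys(1,2) v(2) unfolding is_run_def by (auto simp: less_Suc_eq_0_disj)
  moreover have "outputs_close H d \<delta> (Suc p) xs ?ys"
    using ys(3) w(2) unfolding outputs_close_def by (auto split: nat.split)
  ultimately show "w \<in> initial_estimate X T H d \<delta> (Suc p) xs"
    using w(1) unfolding initial_estimate_def by (intro CollectI conjI exI) auto
qed

subsection \<open>Reachable states of the estimators\<close>

lemma cur_est_reach_imp_run:
  assumes "T \<subseteq> X \<times> U \<times> X" "(x, q) \<in> cur_est_reach X X0 U T H d \<delta>"
  shows "\<exists>k xs us. xs 0 \<in> X0 \<and> is_run T k xs us \<and> xs k = x \<and> q = current_estimate X0 T H d \<delta> k xs"
  using assms(2)
proof (induction rule: cur_est_reach.induct[split_format(complete)])
  case (init x q)
  then show ?case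
    by (intro exI[of _ 0] exI[of _ "\<lambda>_. x"]) (auto simp: cur_est_init_def current_estimate_0)
next
  case (step x q u x' q')
  then obtain k xs us where run: "xs 0 \<in> X0" "is_run T k xs us" "xs k = x"
    and q: "q = current_estimate X0 T H d \<delta> k xs" by blast
  have "(x, u, x') \<in> T" and q': "q' = (\<Union>u\<in>U. Post T u q) \<inter> close_set X H d \<delta> x'"
    using step.hyps(3) by (auto simp: cur_est_trans_def)
  then have "is_run T (Suc k) (xs(Suc k := x')) (us(Suc k := u))" using is_run_snoc run(2,3) by metis
  moreover have "q' = current_estimate X0 T H d \<delta> (Suc k) (xs(Suc k := x'))"
  proof -
    have "current_estimate X0 T H d \<delta> k (xs(Suc k := x')) = q"
      unfolding q by (rule current_estimate_cong) simp
    then show ?thesis unfolding q' current_estimate_Suc[OF assms(1)] by simp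
  qed
  moreover have "(xs(Suc k := x')) 0 \<in> X0" "(xs(Suc k := x')) (Suc k) = x'" using run(1) by simp_all
  ultimately show ?case by blast
qed

lemma run_imp_cur_est_reach:
  assumes "T \<subseteq> X \<times> U \<times> X" "xs 0 \<in> X0" "is_run T k xs us"
  shows "(xs k, current_estimate X0 T H d \<delta> k xs) \<in> cur_est_reach X X0 U T H d \<delta>"
  using assms(3)
proof (induction k)
  case 0
  show ?case using assms(2)
    by (auto simp: current_estimate_0 cur_est_init_def intro: cur_est_reach.init)
next
  case (Suc k)
  have step: "(xs k, us (Suc k), xs (Suc k)) \<in> T" using Suc.prems by (simp add: is_run_def)
  have "(xs k, current_estimate X0 T H d \<delta> k xs) \<in> cur_est_reach X X0 U T H d \<delta>"
    using Suc.IH is_run_prefix[OF Suc.prems, of k] by simp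
  then show ?case
  proof (rule cur_est_reach.step)
    show "us (Suc k) \<in> U" using step assms(1) by auto
    show "cur_est_trans X U T H d \<delta> (xs k, current_estimate X0 T H d \<delta> k xs) (us (Suc k))
        (xs (Suc k), current_estimate X0 T H d \<delta> (Suc k) xs)"
      using step by (simp add: cur_est_trans_def current_estimate_Suc[OF assms(1)])
  qed
qed

lemma init_est_reach_imp_run:
  assumes "T \<subseteq> X \<times> U \<times> X" "(x, q) \<in> init_est_reach X U T H d \<delta>"
  shows "\<exists>p xs us. is_run T p xs us \<and> xs 0 = x \<and> q = initial_estimate X T H d \<delta> p xs"
  using assms(2)
proof (induction rule: init_est_reach.induct[split_format(complete)])
  case (init x q)
  then show ?case
    by (intro exI[of _ 0] exI[of _ "\<lambda>_. x"]) (auto simp: init_est_init_def initial_estimate_0)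
next
  case (step x q u x' q')
  then obtain p xs us where run: "is_run T p xs us" "xs 0 = x"
    and q: "q = initial_estimate X T H d \<delta> p xs" by blast
  have "(x', u, x) \<in> T" and q': "q' = (\<Union>u\<in>U. Pre T u q) \<inter> close_set X H d \<delta> x'"
    using step.hyps(3) by (auto simp: init_est_trans_def)
  then have "is_run T (Suc p) (case_nat x' xs) (\<lambda>i. if i = 1 then u else us (i - 1))"
    using run unfolding is_run_def by (auto simp: less_Suc_eq_0_disj)
  moreover have "q' = initial_estimate X T H d \<delta> (Suc p) (case_nat x' xs)"
    unfolding q q' initial_estimate_Suc[OF assms(1)] by simp
  moreover have "case_nat x' xs 0 = x'" by simp
  ultimately show ?case by blast
qed

lemma run_imp_init_est_reach:
  assumes "T \<subseteq> X \<times> U \<times> X" "is_run T p xs us" "xs 0 \<in> X"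
  shows "(xs 0, initial_estimate X T H d \<delta> p xs) \<in> init_est_reach X U T H d \<delta>"
  using assms(2,3)
proof (induction p arbitrary: xs us)
  case 0
  then show ?case by (auto simp: initial_estimate_0 init_est_init_def intro: init_est_reach.init)
next
  case (Suc p)
  then have step: "(xs 0, us 1, xs 1) \<in> T" and run: "is_run T p (\<lambda>i. xs (Suc i)) (\<lambda>i. us (Suc i))"
    by (simp_all add: is_run_Suc_iff)
  have "(xs 1, initial_estimate X T H d \<delta> p (\<lambda>i. xs (Suc i))) \<in> init_est_reach X U T H d \<delta>"
    using Suc.IH[OF run] step assms(1) by auto
  then show ?case
  proof (rule init_est_reach.step)
    show "us 1 \<in> U" using step assms(1) by auto
    show "init_est_trans X U T H d \<delta> (xs 1, initial_estimate X T H d \<delta> p (\<lambda>i. xs (Suc i))) (us 1)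
        (xs 0, initial_estimate X T H d \<delta> (Suc p) xs)"
      using step unfolding init_est_trans_def initial_estimate_Suc[OF assms(1)] by simp
  qed
qed

subsection \<open>Opacity through the estimates\<close>

lemma mem_current_inter_initial_estimate:
  assumes "k \<le> n"
  shows "w \<in> current_estimate X0 T H d \<delta> k xs \<inter> initial_estimate X T H d \<delta> (n - k) (\<lambda>i. xs (i + k))
    \<longleftrightarrow> w \<in> X \<and> (\<exists>ys vs. ys 0 \<in> X0 \<and> is_run T n ys vs \<and> ys k = w \<and> outputs_close H d \<delta> n xs ys)"
proof
  assume "w \<in> current_estimate X0 T H d \<delta> k xs \<inter> initial_estimate X T H d \<delta> (n - k) (\<lambda>i. xs (i + k))"
  then obtain f us g vs where f: "f 0 \<in> X0" "is_run T k f us" "f k = w" "outputs_close H d \<delta> k xs f"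
    and g: "w \<in> X" "is_run T (n - k) g vs" "g 0 = w" "outputs_close H d \<delta> (n - k) (\<lambda>i. xs (i + k)) g"
    unfolding current_estimate_def initial_estimate_def by blast
  have "is_run T n (run_append k f g) (run_append k us vs)"
    using is_run_append[OF f(2) g(2)] f(3) g(3) assms by simp
  moreover have "outputs_close H d \<delta> n xs (run_append k f g)"
    using outputs_close_append[OF f(4) g(4)] assms by simp
  ultimately show "w \<in> X \<and> (\<exists>ys vs. ys 0 \<in> X0 \<and> is_run T n ys vs \<and> ys k = w \<and> outputs_close H d \<delta> n xs ys)"
    using f(1,3) g(1) by (intro conjI exI[of _ "run_append k f g"]) (auto simp: run_append_def)
next
  assume "w \<in> X \<and> (\<exists>ys vs. ys 0 \<in> X0 \<and> is_run T n ys vs \<and> ys k = w \<and> outputs_close H d \<delta> n xs ys)"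
  then obtain ys vs where ys: "w \<in> X" "ys 0 \<in> X0" "is_run T n ys vs" "ys k = w"
    and close: "outputs_close H d \<delta> n xs ys" by blast
  have "w \<in> current_estimate X0 T H d \<delta> k xs"
    using ys is_run_prefix[OF ys(3) assms] outputs_close_prefix[OF close assms]
    unfolding current_estimate_def by blast
  moreover have "w \<in> initial_estimate X T H d \<delta> (n - k) (\<lambda>i. xs (i + k))"
    using ys is_run_suffix[OF ys(3) assms] outputs_close_suffix[OF close assms]
    unfolding initial_estimate_def by (intro CollectI conjI exI[of _ "\<lambda>i. ys (i + k)"]) auto
  ultimately show "w \<in> current_estimate X0 T H d \<delta> k xs \<inter> initial_estimate X T H d \<delta> (n - k) (\<lambda>i. xs (i + k))"
    by blast
qed

lemma approx_inf_step_opaque_iff_estimates: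
  "approx_inf_step_opaque X X0 XS T H d \<delta> \<longleftrightarrow>
    (\<forall>n xs us k. xs 0 \<in> X0 \<and> is_run T n xs us \<and> k \<le> n \<and> xs k \<in> XS \<longrightarrow>
      \<not> current_estimate X0 T H d \<delta> k xs \<inter> initial_estimate X T H d \<delta> (n - k) (\<lambda>i. xs (i + k)) \<subseteq> XS)"
proof -
  have masked_iff: "(\<exists>ys vs. ys 0 \<in> X0 \<and> is_run T n ys vs \<and> ys k \<in> X - XS \<and> (\<forall>i\<le>n. d (H (xs i)) (H (ys i)) \<le> \<delta>))
      \<longleftrightarrow> \<not> current_estimate X0 T H d \<delta> k xs \<inter> initial_estimate X T H d \<delta> (n - k) (\<lambda>i. xs (i + k)) \<subseteq> XS"
    if "k \<le> n" for n k and xs :: "nat \<Rightarrow> 'a"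
  proof -
    have "\<not> current_estimate X0 T H d \<delta> k xs \<inter> initial_estimate X T H d \<delta> (n - k) (\<lambda>i. xs (i + k)) \<subseteq> XS
        \<longleftrightarrow> (\<exists>w. w \<in> current_estimate X0 T H d \<delta> k xs \<inter> initial_estimate X T H d \<delta> (n - k) (\<lambda>i. xs (i + k)) \<and> w \<notin> XS)"
      by blast
    also have "\<dots> \<longleftrightarrow> (\<exists>w. w \<in> X \<and> (\<exists>ys vs. ys 0 \<in> X0 \<and> is_run T n ys vs \<and> ys k = w \<and> outputs_close H d \<delta> n xs ys) \<and> w \<notin> XS)"
      by (simp only: mem_current_inter_initial_estimate[OF that] conj_assoc)
    finally show ?thesis unfolding outputs_close_def by blast
  qed
  show ?thesis unfolding approx_inf_step_opaque_def
    by (intro iff_allI imp_cong refl masked_iff) simp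
qed

lemma estimator_states_of_run:
  assumes "T \<subseteq> X \<times> U \<times> X" "X0 \<subseteq> X" "xs 0 \<in> X0" "is_run T n xs us" "k \<le> n"
  shows "(xs k, initial_estimate X T H d \<delta> (n - k) (\<lambda>i. xs (i + k))) \<in> init_est_reach X U T H d \<delta>"
    and "(xs k, current_estimate X0 T H d \<delta> k xs) \<in> cur_est_reach X X0 U T H d \<delta>"
proof -
  have prefix: "is_run T k xs us" using is_run_prefix[OF assms(4,5)] .
  then have "xs k \<in> X" using is_run_in_states[OF assms(1)] assms(2,3) by blast
  then show "(xs k, initial_estimate X T H d \<delta> (n - k) (\<lambda>i. xs (i + k))) \<in> init_est_reach X U T H d \<delta>"
    using run_imp_init_est_reach[OF assms(1) is_run_suffix[OF assms(4,5)]] by simp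
  show "(xs k, current_estimate X0 T H d \<delta> k xs) \<in> cur_est_reach X X0 U T H d \<delta>"
    using run_imp_cur_est_reach[OF assms(1,3) prefix] .
qed

lemma run_of_estimator_states:
  assumes "T \<subseteq> X \<times> U \<times> X"
    and "(x, q) \<in> init_est_reach X U T H d \<delta>" "(x, q') \<in> cur_est_reach X X0 U T H d \<delta>"
  obtains n xs us k where "xs 0 \<in> X0" "is_run T n xs us" "k \<le> n" "xs k = x"
    "q' = current_estimate X0 T H d \<delta> k xs" "q = initial_estimate X T H d \<delta> (n - k) (\<lambda>i. xs (i + k))"
proof -
  obtain k f us where f: "f 0 \<in> X0" "is_run T k f us" "f k = x"
    and q': "q' = current_estimate X0 T H d \<delta> k f"
    using cur_est_reach_imp_run[OF assms(1,3)] by blast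
  obtain p g vs where g: "is_run T p g vs" "g 0 = x" and q: "q = initial_estimate X T H d \<delta> p g"
    using init_est_reach_imp_run[OF assms(1,2)] by blast
  let ?xs = "run_append k f g"
  have "current_estimate X0 T H d \<delta> k ?xs = q'"
    unfolding q' by (rule current_estimate_cong) (simp add: run_append_def)
  moreover have "initial_estimate X T H d \<delta> p (\<lambda>i. ?xs (i + k)) = q"
    unfolding q using f(3) g(2) by (intro initial_estimate_cong) (auto simp: run_append_def)
  moreover have "is_run T (k + p) ?xs (run_append k us vs)"
    using is_run_append[OF f(2) g(1)] f(3) g(2) by simp
  moreover have "?xs 0 \<in> X0" "?xs k = x" using f(1,3) by (simp_all add: run_append_def)
  ultimately show thesis using that[of ?xs "k + p" "run_append k us vs" k] by simp
qed

theorem mainTheorem4: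
  fixes X X0 XS :: "'x set" and U :: "'u set" and T :: "('x \<times> 'u \<times> 'x) set"
    and Y :: "'y set" and H :: "'x \<Rightarrow> 'y" and d :: "'y \<Rightarrow> 'y \<Rightarrow> real" and \<delta> :: real
  assumes "is_system X X0 XS U T Y H"
    and "finite X" and "finite U"
    and "Metric_space Y d"
    and "\<delta> \<ge> 0"
  shows "approx_inf_step_opaque X X0 XS T H d \<delta> \<longleftrightarrow>
    (\<forall>x q x' q'. (x, q) \<in> init_est_reach X U T H d \<delta> \<longrightarrow> (x', q') \<in> cur_est_reach X X0 U T H d \<delta> \<longrightarrow>
       x = x' \<longrightarrow> x \<in> XS \<longrightarrow> \<not> (q \<inter> q' \<subseteq> XS))"
proof -
  have T: "T \<subseteq> X \<times> U \<times> X" and X0: "X0 \<subseteq> X" using assms(1) by (auto simp: is_system_def)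
  show ?thesis unfolding approx_inf_step_opaque_iff_estimates
  proof (intro iffI allI impI)
    fix x q x' q'
    assume opaque: "\<forall>n xs us k. xs 0 \<in> X0 \<and> is_run T n xs us \<and> k \<le> n \<and> xs k \<in> XS \<longrightarrow>
        \<not> current_estimate X0 T H d \<delta> k xs \<inter> initial_estimate X T H d \<delta> (n - k) (\<lambda>i. xs (i + k)) \<subseteq> XS"
      and "(x, q) \<in> init_est_reach X U T H d \<delta>" "(x', q') \<in> cur_est_reach X X0 U T H d \<delta>"
      and "x = x'" "x \<in> XS"
    then show "\<not> q \<inter> q' \<subseteq> XS"
      by (elim run_of_estimator_states[OF T]) (auto simp: Int_commute dest!: opaque[rule_format])
  next
    fix n xs us k
    assume "\<forall>x q x' q'. (x, q) \<in> init_est_reach X U T H d \<delta> \<longrightarrow> (x', q') \<in> cur_est_reach X X0 U T H d \<delta> \<longrightarrow>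
        x = x' \<longrightarrow> x \<in> XS \<longrightarrow> \<not> q \<inter> q' \<subseteq> XS"
      and "xs 0 \<in> X0 \<and> is_run T n xs us \<and> k \<le> n \<and> xs k \<in> XS"
    then show "\<not> current_estimate X0 T H d \<delta> k xs \<inter> initial_estimate X T H d \<delta> (n - k) (\<lambda>i. xs (i + k)) \<subseteq> XS"
      using estimator_states_of_run[OF T X0] by (metis Int_commute)
  qed
qed

end
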